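(* Under the standing assumptions below, $P(t)=Q(t)$ is the unique $1$-periodic smooth family of projections $P(t)$ onto co-dimension-one subspaces (rank $n-1$) such that $X(t)P(0)=P(t)X(t)$ for all $t$ and $\Gamma(t)$ restricts to a bijection of $\operatorname{Im}P(t)$ onto itself for every $t$.
   Context: Let $n\ge 1$, let $f:\mathbb{R}^n\to\mathbb{R}^n$ be smooth, let $T>0$, and let $\gamma:\mathbb{R}\to\mathbb{R}^n$ be a $1$-periodic solution of $\dot x=Tf(x)$ with $f(\gamma(0))\neq 0$. Let $X(t)$ be the $n\times n$ matrix solution of $\dot X=T\,\mathrm{D}f(\gamma(t))X$, $X(0)=I_n$. Let $\Gamma(t):=X(t)(X(1)-I_n)X^{-1}(t)$. Hyperbolicity assumption: there is a vector $w\in\mathbb{R}^n$ such that $Q(t):=X(t)\big(I_n-f(\gamma(0))w^\mathsf{T}\big)X^{-1}(t)$ is a projection for every $t$, the family is $1$-periodic, and $\Gamma(t)$ restricts to a bijection of $\operatorname{Im}Q(t)$ onto itself. *)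

theory Defs
  imports "HOL-Analysis.Analysis"
begin

definition smooth_map :: "('a::real_normed_vector \<Rightarrow> 'b::real_normed_vector) \<Rightarrow> bool" where
  "smooth_map g \<longleftrightarrow> (\<exists>D :: nat \<Rightarrow> 'a \<Rightarrow> 'a list \<Rightarrow> 'b.
      (\<forall>x. D 0 x [] = g x) \<and>
      (\<forall>k vs x. length vs = k \<longrightarrow>
          ((\<lambda>y. D k y vs) has_derivative (\<lambda>h. D (Suc k) x (h # vs))) (at x)))"

definition outer :: "real^'n \<Rightarrow> real^'n \<Rightarrow> real^'n^'n" where
  "outer u w = (\<chi> i j. u $ i * w $ j)"

definition mat_image :: "real^'n^'n \<Rightarrow> (real^'n) set" where
  "mat_image A = range (\<lambda>v. A *v v)"

definition Gamma_mat :: "(real \<Rightarrow> real^'n^'n) \<Rightarrow> real \<Rightarrow> real^'n^'n" where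
  "Gamma_mat X t = X t ** (X 1 - mat 1) ** matrix_inv (X t)"

definition Q_mat :: "(real \<Rightarrow> real^'n^'n) \<Rightarrow> real^'n \<Rightarrow> real^'n \<Rightarrow> real \<Rightarrow> real^'n^'n" where
  "Q_mat X u w t = X t ** (mat 1 - outer u w) ** matrix_inv (X t)"

end

theory Submission
  imports Defs
begin

text \<open>Write \<open>u = f(\<gamma>(0))\<close> and \<open>E = I - u w\<^sup>T\<close>, so that \<open>Q(t) = X(t) E X(t)\<^sup>-\<^sup>1\<close>.
  Differentiating \<open>f \<circ> \<gamma>\<close> shows that it solves the variational equation, hence
  \<open>X(t) u = f(\<gamma>(t))\<close> and by periodicity \<open>u\<close> lies in the kernel of the monodromy
  \<open>M = X(1) - I = \<Gamma>(0)\<close>. As \<open>M\<close> is bijective on \<open>Im E\<close> but not on the whole space,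
  \<open>E\<close> is a genuine rank-one projection, \<open>w \<bullet> u = 1\<close>, and \<open>Im E\<close> is the hyperplane
  \<open>w\<^sup>\<bottom>\<close>. Smoothness of \<open>Q\<close> follows since \<open>X\<close> solves a linear equation with smooth
  coefficients and \<open>X\<^sup>-\<^sup>1\<close> is smooth by Cramer's rule.

  For uniqueness, a family \<open>P\<close> with the stated properties is \<open>X(t) P(0) X(t)\<^sup>-\<^sup>1\<close>, and
  \<open>P(0)\<close> commutes with \<open>M\<close> by periodicity. Injectivity of \<open>M\<close> on \<open>Im P(0)\<close> forces
  \<open>P(0) u = 0\<close>; moreover \<open>Im P(0) \<subseteq> Im M \<subseteq> Im E\<close>, and equal dimensions give
  \<open>Im P(0) = Im E\<close>. A projection is determined by its image and kernel, so \<open>P(0) = E\<close>.\<close>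

section \<open>Curves with \<open>k\<close> derivatives\<close>

text \<open>Continuity of the \<open>k\<close>-th derivative
  is not demanded; this is harmless as only \<open>\<forall>k. Ck k g\<close> is ever concluded.\<close>

fun Ck :: "nat \<Rightarrow> (real \<Rightarrow> 'b::real_normed_vector) \<Rightarrow> bool" where
  "Ck 0 g \<longleftrightarrow> True"
| "Ck (Suc k) g \<longleftrightarrow> (\<forall>t. g differentiable at t) \<and> Ck k (\<lambda>t. vector_derivative g (at t))"

lemma Ck_Suc_has_vector_derivative:
  "Ck (Suc k) g \<Longrightarrow> (g has_vector_derivative vector_derivative g (at t)) (at t)"
  by (simp add: vector_derivative_works[symmetric])

lemma Ck_Suc_continuous: "Ck (Suc k) g \<Longrightarrow> continuous_on UNIV g"
  by (meson Ck_Suc_has_vector_derivative has_vector_derivative_continuous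
      continuous_at_imp_continuous_on)

lemma Ck_SucD: "Ck (Suc k) g \<Longrightarrow> Ck k g"
  by (induction k arbitrary: g) auto

lemma Ck_SucI:
  assumes "\<And>t. (g has_vector_derivative g' t) (at t)" and "Ck k g'"
  shows "Ck (Suc k) g"
proof -
  have "(\<lambda>t. vector_derivative g (at t)) = g'"
    using assms(1) vector_derivative_at by blast
  with assms show ?thesis
    by (auto intro: differentiableI_vector)
qed

lemma Ck_const: "Ck k (\<lambda>t. c)"
  by (induction k arbitrary: c) (auto intro: Ck_SucI[OF has_vector_derivative_const])

lemma Ck_add: "Ck k g \<Longrightarrow> Ck k h \<Longrightarrow> Ck k (\<lambda>t. g t + h t)"
proof (induction k arbitrary: g h)
  case (Suc k)
  show ?case
    by (rule Ck_SucI[OF has_vector_derivative_add[OF Ck_Suc_has_vector_derivative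
          Ck_Suc_has_vector_derivative]])
      (use Suc in auto)
qed simp

lemma Ck_bounded_linear: "bounded_linear L \<Longrightarrow> Ck k g \<Longrightarrow> Ck k (\<lambda>t. L (g t))"
proof (induction k arbitrary: g)
  case (Suc k)
  show ?case
    by (rule Ck_SucI[OF bounded_linear.has_vector_derivative[OF Suc.prems(1)
          Ck_Suc_has_vector_derivative]])
      (use Suc in auto)
qed simp

lemma Ck_bounded_bilinear:
  fixes prod :: "'a::real_normed_vector \<Rightarrow> 'b::real_normed_vector \<Rightarrow> 'c::real_normed_vector"
  shows "bounded_bilinear prod \<Longrightarrow> Ck k g \<Longrightarrow> Ck k h \<Longrightarrow> Ck k (\<lambda>t. prod (g t) (h t))"
proof (induction k arbitrary: g h)
  case (Suc k)
  let ?g' = "\<lambda>t. vector_derivative g (at t)" and ?h' = "\<lambda>t. vector_derivative h (at t)"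
  have "((\<lambda>t. prod (g t) (h t)) has_vector_derivative
      prod (g t) (?h' t) + prod (?g' t) (h t)) (at t)" for t
    using Suc.prems by (intro bounded_bilinear.has_vector_derivative Ck_Suc_has_vector_derivative)
  moreover have "Ck k (\<lambda>t. prod (g t) (?h' t) + prod (?g' t) (h t))"
    using Suc Ck_SucD[of k g] Ck_SucD[of k h] by (intro Ck_add Suc.IH) auto
  ultimately show ?case by (rule Ck_SucI)
qed simp

lemma Ck_sum: "finite S \<Longrightarrow> (\<And>i. i \<in> S \<Longrightarrow> Ck k (g i)) \<Longrightarrow> Ck k (\<lambda>t. \<Sum>i\<in>S. g i t)"
  by (induction S rule: finite_induct) (auto simp: Ck_const Ck_add)

lemma Ck_prod:
  fixes g :: "'i \<Rightarrow> real \<Rightarrow> 'a::real_normed_field"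
  shows "finite S \<Longrightarrow> (\<And>i. i \<in> S \<Longrightarrow> Ck k (g i)) \<Longrightarrow> Ck k (\<lambda>t. \<Prod>i\<in>S. g i t)"
  by (induction S rule: finite_induct)
    (auto simp: Ck_const intro: Ck_bounded_bilinear[OF bounded_bilinear_mult])

lemma Ck_mult:
  fixes g h :: "real \<Rightarrow> 'a::real_normed_algebra"
  shows "Ck k g \<Longrightarrow> Ck k h \<Longrightarrow> Ck k (\<lambda>t. g t * h t)"
  by (rule Ck_bounded_bilinear[OF bounded_bilinear_mult])

lemma Ck_inverse:
  fixes g :: "real \<Rightarrow> real"
  shows "(\<And>t. g t \<noteq> 0) \<Longrightarrow> Ck k g \<Longrightarrow> Ck k (\<lambda>t. inverse (g t))"
proof (induction k arbitrary: g)
  case (Suc k)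
  let ?g' = "\<lambda>t. vector_derivative g (at t)"
  have "((\<lambda>t. inverse (g t)) has_vector_derivative
      - (?g' t * (inverse (g t) * inverse (g t)))) (at t)" for t
    using DERIV_inverse_fun[OF Ck_Suc_has_vector_derivative[OF Suc.prems(2),
          unfolded has_real_derivative_iff_has_vector_derivative[symmetric]] Suc.prems(1)]
    by (simp add: has_real_derivative_iff_has_vector_derivative power2_eq_square)
  moreover have "Ck k (\<lambda>t. - (?g' t * (inverse (g t) * inverse (g t))))"
    using Suc Ck_SucD
    by (auto intro!: Ck_mult Ck_bounded_linear[OF bounded_linear_minus[OF bounded_linear_ident]])
  ultimately show ?case by (rule Ck_SucI)
qed simp

lemma norm_axis: "norm (axis i x :: 'a::real_normed_vector^'n) = norm x"
proof -
  have "(\<Sum>j\<in>UNIV. (norm (axis i x $ j))\<^sup>2) = (\<Sum>j\<in>UNIV. if j = i then (norm x)\<^sup>2 else 0)"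
    by (rule sum.cong) (auto simp: axis_def)
  then show ?thesis
    by (simp add: norm_vec_def L2_set_def)
qed

lemma bounded_linear_axis: "bounded_linear (axis i :: 'a::real_normed_vector \<Rightarrow> 'a^'n)"
  by (rule bounded_linear_intro[where K = 1])
    (auto simp: vec_eq_iff axis_def norm_axis[unfolded axis_def])

lemma Ck_vec:
  fixes g :: "'n::finite \<Rightarrow> real \<Rightarrow> 'a::real_normed_vector"
  assumes "\<And>i. Ck k (g i)"
  shows "Ck k (\<lambda>t. \<chi> i. g i t)"
proof -
  have "(\<chi> i. g i t) = (\<Sum>i\<in>UNIV. axis i (g i t))" for t
    by (simp add: vec_eq_iff axis_def if_distrib)
  then show ?thesis
    using assms by (simp add: Ck_sum Ck_bounded_linear[OF bounded_linear_axis])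
qed

lemma smooth_map_if_Ck:
  fixes g :: "real \<Rightarrow> 'b::real_normed_vector"
  assumes "\<And>k. Ck k g"
  shows "smooth_map g"
proof -
  define nd where "nd j = ((\<lambda>h t. vector_derivative h (at t)) ^^ j) g" for j
  have nd_Ck: "Ck k (nd j)" for j k
  proof (induction j arbitrary: k)
    case 0
    then show ?case using assms by (simp add: nd_def)
  next
    case (Suc j)
    have "Ck (Suc k) (nd j)"
      by (rule Suc.IH)
    then show ?case
      by (simp add: nd_def)
  qed
  have nd_deriv: "(nd k has_vector_derivative nd (Suc k) x) (at x)" for k x
    using Ck_Suc_has_vector_derivative[OF nd_Ck[of "Suc 0" k]] by (simp add: nd_def)
  define D where "D k y vs = prod_list vs *\<^sub>R nd k y" for k y and vs :: "real list"
  have "((\<lambda>y. D k y vs) has_derivative (\<lambda>h. D (Suc k) x (h # vs))) (at x)" for k vs x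
    using bounded_linear.has_vector_derivative[OF bounded_linear_scaleR_right nd_deriv,
        of "prod_list vs" k x]
    by (simp add: D_def has_vector_derivative_def mult.commute)
  moreover have "D 0 x [] = g x" for x
    by (simp add: D_def nd_def)
  ultimately show ?thesis
    unfolding smooth_map_def by blast
qed

lemma Ck_compose_derivative_tower:
  fixes D :: "nat \<Rightarrow> 'a::euclidean_space \<Rightarrow> 'a list \<Rightarrow> 'b::real_normed_vector"
  assumes D: "\<And>k vs x. length vs = k \<Longrightarrow>
      ((\<lambda>y. D k y vs) has_derivative (\<lambda>h. D (Suc k) x (h # vs))) (at x)"
  shows "Ck k \<gamma> \<Longrightarrow> length vs = m \<Longrightarrow> Ck k (\<lambda>t. D m (\<gamma> t) vs)"
proof (induction k arbitrary: m vs)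
  case (Suc k)
  let ?\<gamma>' = "\<lambda>t. vector_derivative \<gamma> (at t)"
  have "((\<lambda>t. D m (\<gamma> t) vs) has_vector_derivative
      (\<Sum>i\<in>Basis. (?\<gamma>' t \<bullet> i) *\<^sub>R D (Suc m) (\<gamma> t) (i # vs))) (at t)" for t
  proof -
    have D_at: "((\<lambda>y. D m y vs) has_derivative (\<lambda>h. D (Suc m) (\<gamma> t) (h # vs))) (at (\<gamma> t))"
      using D Suc.prems(2) by blast
    then interpret DL: linear "\<lambda>h. D (Suc m) (\<gamma> t) (h # vs)"
      using has_derivative_linear by blast
    have "((\<lambda>t. D m (\<gamma> t) vs) has_derivative (\<lambda>h. D (Suc m) (\<gamma> t) ((h *\<^sub>R ?\<gamma>' t) # vs))) (at t)"
      using diff_chain_at[OF Ck_Suc_has_vector_derivative[OF Suc.prems(1),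
          unfolded has_vector_derivative_def] D_at]
      by (simp add: o_def)
    moreover have "D (Suc m) (\<gamma> t) ((h *\<^sub>R ?\<gamma>' t) # vs) =
        h *\<^sub>R (\<Sum>i\<in>Basis. (?\<gamma>' t \<bullet> i) *\<^sub>R D (Suc m) (\<gamma> t) (i # vs))" for h
      using DL.scale[of h "?\<gamma>' t"] DL.sum[of "\<lambda>i. (?\<gamma>' t \<bullet> i) *\<^sub>R i" Basis]
      by (simp add: euclidean_representation DL.scale)
    ultimately show ?thesis
      by (simp add: has_vector_derivative_def)
  qed
  moreover have "Ck k (\<lambda>t. \<Sum>i\<in>Basis. (?\<gamma>' t \<bullet> i) *\<^sub>R D (Suc m) (\<gamma> t) (i # vs))"
    using Suc.prems Suc.IH[OF Ck_SucD[OF Suc.prems(1)], of "_ # vs"]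
    by (intro Ck_sum Ck_bounded_bilinear[OF bounded_bilinear_scaleR]
        Ck_bounded_linear[OF bounded_linear_inner_left]) auto
  ultimately show ?case by (rule Ck_SucI)
qed simp

lemma Ck_compose_smooth_map:
  fixes f :: "'a::euclidean_space \<Rightarrow> 'b::real_normed_vector"
  assumes "smooth_map f" and "Ck k \<gamma>"
  shows "Ck k (\<lambda>t. f (\<gamma> t))"
proof -
  obtain D :: "nat \<Rightarrow> 'a \<Rightarrow> 'a list \<Rightarrow> 'b" where "\<And>x. D 0 x [] = f x"
    and "\<And>k vs x. length vs = k \<Longrightarrow> ((\<lambda>y. D k y vs) has_derivative (\<lambda>h. D (Suc k) x (h # vs))) (at x)"
    using assms(1) unfolding smooth_map_def by blast
  with Ck_compose_derivative_tower[of D k \<gamma> "[]" 0] assms(2) show ?thesis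
    by simp
qed

lemma Ck_compose_derivative_matrix:
  fixes f :: "real^'n \<Rightarrow> real^'m" and Df :: "real^'n \<Rightarrow> real^'n^'m"
  assumes "smooth_map f" and Df: "\<And>x. (f has_derivative (\<lambda>h. Df x *v h)) (at x)"
    and "Ck k \<gamma>"
  shows "Ck k (\<lambda>t. Df (\<gamma> t))"
proof -
  obtain D :: "nat \<Rightarrow> real^'n \<Rightarrow> (real^'n) list \<Rightarrow> real^'m" where D0: "\<And>x. D 0 x [] = f x"
    and D: "\<And>k vs x. length vs = k \<Longrightarrow>
      ((\<lambda>y. D k y vs) has_derivative (\<lambda>h. D (Suc k) x (h # vs))) (at x)"
    using assms(1) unfolding smooth_map_def by blast
  have "(f has_derivative (\<lambda>h. D (Suc 0) x [h])) (at x)" for x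
    using D[of "[]" 0 x] D0 by simp
  then have "D (Suc 0) x [h] = Df x *v h" for x h
    using has_derivative_unique Df by metis
  then have "Df y = (\<chi> i j. D (Suc 0) y [axis j 1] $ i)" for y
    by (simp add: vec_eq_iff matrix_vector_mult_basis column_def)
  moreover have "Ck k (\<lambda>t. D (Suc 0) (\<gamma> t) [axis j 1] $ i)" for i j
    using Ck_compose_derivative_tower[where D = D, OF D assms(3), of "[axis j 1]"]
    by (intro Ck_bounded_linear[OF bounded_linear_vec_nth]) simp
  ultimately show ?thesis
    by (simp add: Ck_vec)
qed

lemma smooth_map_scaleR:
  fixes f :: "'a::real_normed_vector \<Rightarrow> 'b::real_normed_vector"
  assumes "smooth_map f"
  shows "smooth_map (\<lambda>x. c *\<^sub>R f x)"
proof -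
  obtain D :: "nat \<Rightarrow> 'a \<Rightarrow> 'a list \<Rightarrow> 'b" where "\<And>x. D 0 x [] = f x"
    and "\<And>k vs x. length vs = k \<Longrightarrow> ((\<lambda>y. D k y vs) has_derivative (\<lambda>h. D (Suc k) x (h # vs))) (at x)"
    using assms unfolding smooth_map_def by blast
  then show ?thesis
    unfolding smooth_map_def
    by (intro exI[of _ "\<lambda>k x vs. c *\<^sub>R D k x vs"]) (auto intro: has_derivative_scaleR_right)
qed

lemma Ck_autonomous_ode_solution:
  fixes f :: "'a::euclidean_space \<Rightarrow> 'a"
  assumes "smooth_map f" and "\<And>t. (\<gamma> has_vector_derivative f (\<gamma> t)) (at t)"
  shows "Ck k \<gamma>"
proof (induction k)
  case (Suc k)
  show ?case
    by (rule Ck_SucI[OF assms(2) Ck_compose_smooth_map[OF assms(1) Suc.IH]])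
qed simp

section \<open>Matrices\<close>

lemma bounded_bilinear_matrix_matrix_mult:
  "bounded_bilinear (\<lambda>(A::real^'n^'m) (B::real^'p^'n). A ** B)"
proof -
  have "bilinear (\<lambda>(A::real^'n^'m) (B::real^'p^'n). A ** B)"
    unfolding bilinear_def
    by (auto simp: linear_iff vec_eq_iff matrix_matrix_mult_def sum.distrib
        scaleR_sum_right sum_distrib_left field_simps)
  then show ?thesis
    using bilinear_conv_bounded_bilinear by blast
qed

lemma bounded_bilinear_matrix_vector_mult:
  "bounded_bilinear (\<lambda>(A::real^'n^'m) (v::real^'n). A *v v)"
proof -
  have "bilinear (\<lambda>(A::real^'n^'m) (v::real^'n). A *v v)"
    unfolding bilinear_def
    by (auto simp: linear_iff vec_eq_iff matrix_vector_mult_def sum.distrib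
        scaleR_sum_right sum_distrib_left field_simps)
  then show ?thesis
    using bilinear_conv_bounded_bilinear by blast
qed

lemma Ck_matrix_entry: "Ck k A \<Longrightarrow> Ck k (\<lambda>t. A t $ i $ j)"
  by (intro Ck_bounded_linear[OF bounded_linear_vec_nth])

lemma Ck_det:
  fixes A :: "real \<Rightarrow> real^'n^'n"
  assumes "Ck k A"
  shows "Ck k (\<lambda>t. det (A t))"
  unfolding det_def using assms
  by (intro Ck_sum Ck_mult Ck_const Ck_prod Ck_matrix_entry) (simp_all add: finite_permutations)

lemma matrix_inv_right: "invertible A \<Longrightarrow> A ** matrix_inv A = mat 1"
  and matrix_inv_left: "invertible A \<Longrightarrow> matrix_inv A ** A = mat 1"
  unfolding invertible_def matrix_inv_def by (metis (mono_tags, lifting) someI_ex)+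

lemma matrix_inv_mat_1: "matrix_inv (mat 1 :: 'a::comm_ring_1^'n^'n) = mat 1"
  using matrix_inv_right[of "mat 1 :: 'a^'n^'n"] by (simp add: invertible_def)

lemma matrix_inv_cramer:
  fixes A :: "'a::field^'n^'n"
  assumes "invertible A"
  shows "matrix_inv A = (\<chi> i j. det (\<chi> r c. if c = i then axis j 1 $ r else A $ r $ c) / det A)"
proof -
  have "A *v (matrix_inv A *v axis j 1) = axis j 1" for j
    by (simp add: matrix_vector_mul_assoc matrix_inv_right[OF assms])
  then have "matrix_inv A *v axis j 1 =
      (\<chi> i. det (\<chi> r c. if c = i then axis j 1 $ r else A $ r $ c) / det A)" for j
    using cramer assms invertible_det_nz by blast
  moreover have "matrix_inv A $ i $ j = (matrix_inv A *v axis j 1) $ i" for i j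
    by (simp add: matrix_vector_mult_def axis_def if_distrib[where f = "(*) _"] cong: if_cong)
  ultimately show ?thesis
    by (simp add: vec_eq_iff)
qed

lemma Ck_matrix_inv:
  fixes A :: "real \<Rightarrow> real^'n^'n"
  assumes "\<And>t. invertible (A t)" and "Ck k A"
  shows "Ck k (\<lambda>t. matrix_inv (A t))"
proof -
  have "Ck k (\<lambda>t. if c = i then axis j 1 $ r else A t $ r $ c)" for i j r c :: 'n
    by (cases "c = i") (simp_all add: Ck_const Ck_matrix_entry assms(2))
  then have "Ck k (\<lambda>t. \<chi> r c. if c = i then axis j 1 $ r else A t $ r $ c)" for i j :: 'n
    by (simp add: Ck_vec)
  then have "Ck k (\<lambda>t. det (\<chi> r c. if c = i then axis j 1 $ r else A t $ r $ c)
      * inverse (det (A t)))" for i j :: 'n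
    using assms invertible_det_nz by (intro Ck_mult Ck_det Ck_inverse) auto
  then show ?thesis
    using assms(1) by (simp add: matrix_inv_cramer divide_inverse Ck_vec)
qed

lemma rank_similar:
  fixes X E :: "real^'n^'n"
  assumes "invertible X"
  shows "rank (X ** E ** matrix_inv X) = rank E"
proof (rule antisym)
  show "rank (X ** E ** matrix_inv X) \<le> rank E"
    by (metis rank_mul_le_left rank_mul_le_right order_trans)
  have "matrix_inv X ** (X ** E ** matrix_inv X) ** X =
      (matrix_inv X ** X) ** E ** (matrix_inv X ** X)"
    by (simp add: matrix_mul_assoc)
  then have "E = matrix_inv X ** (X ** E ** matrix_inv X) ** X"
    by (simp add: matrix_inv_left[OF assms])
  then show "rank E \<le> rank (X ** E ** matrix_inv X)"
    by (metis rank_mul_le_left rank_mul_le_right order_trans)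
qed

section \<open>Linear differential equations\<close>

text \<open>Gronwall: \<open>|z|\<^sup>2\<close> grows at rate at most \<open>c |z|\<^sup>2\<close> on \<open>[t0, t]\<close> for a suitable
  \<open>c\<close>, so \<open>e\<^sup>-\<^sup>c\<^sup>s |z(s)|\<^sup>2\<close> is nonincreasing there.\<close>

lemma linear_ode_zero_forward:
  fixes z :: "real \<Rightarrow> real^'n" and B :: "real \<Rightarrow> real^'n^'n"
  assumes z': "\<And>s. (z has_vector_derivative B s *v z s) (at s)"
    and B: "continuous_on UNIV B" and z0: "z t0 = 0" and "t0 \<le> t"
  shows "z t = 0"
proof -
  obtain K where K: "\<And>M v. norm ((M::real^'n^'n) *v (v::real^'n)) \<le> norm M * norm v * K" and "K > 0"
    using bounded_bilinear.pos_bounded[OF bounded_bilinear_matrix_vector_mult] by blast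
  have "compact (B ` {t0..t})"
    by (rule compact_continuous_image[OF continuous_on_subset[OF B] compact_Icc]) simp
  then obtain M where M: "\<And>s. s \<in> {t0..t} \<Longrightarrow> norm (B s) \<le> M" and "M > 0"
    using compact_imp_bounded bounded_pos by (metis imageI)
  define c where "c = 2 * M * K"
  define g where "g s = z s \<bullet> z s" for s
  define h where "h s = exp (- c * s) * g s" for s
  have g': "(g has_real_derivative 2 * (z s \<bullet> (B s *v z s))) (at s)" for s
    unfolding g_def
    using bounded_bilinear.has_vector_derivative[OF bounded_bilinear_inner z' z', of s]
    by (simp add: has_real_derivative_iff_has_vector_derivative inner_commute)
  have g'_le: "2 * (z s \<bullet> (B s *v z s)) \<le> c * g s" if "s \<in> {t0..t}" for s
  proof -
    have "z s \<bullet> (B s *v z s) \<le> norm (z s) * norm (B s *v z s)"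
      by (metis Cauchy_Schwarz_ineq2 abs_le_D1)
    also have "\<dots> \<le> norm (z s) * (norm (B s) * norm (z s) * K)"
      by (rule mult_left_mono[OF K]) simp
    also have "\<dots> \<le> norm (z s) * (M * norm (z s) * K)"
      using M[OF that] \<open>K > 0\<close> by (intro mult_left_mono mult_right_mono) auto
    also have "\<dots> = M * K * g s"
      by (simp add: g_def power2_norm_eq_inner[symmetric] power2_eq_square)
    finally show ?thesis
      by (simp add: c_def)
  qed
  have h': "(h has_real_derivative
      - c * exp (- c * s) * g s + 2 * (z s \<bullet> (B s *v z s)) * exp (- c * s)) (at s)" for s
  proof -
    have "((\<lambda>s. exp (- c * s)) has_real_derivative - c * exp (- c * s)) (at s)"
      using DERIV_fun_exp[OF DERIV_cmult_Id[of "- c" s]] by (simp add: mult.commute)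
    from DERIV_mult[OF this g'] show ?thesis
      unfolding h_def .
  qed
  have "h t \<le> h t0"
  proof (rule DERIV_nonpos_imp_nonincreasing[OF \<open>t0 \<le> t\<close>])
    fix s assume "t0 \<le> s" "s \<le> t"
    then have "- c * exp (- c * s) * g s + 2 * (z s \<bullet> (B s *v z s)) * exp (- c * s) \<le> 0"
      using g'_le[of s] by (simp add: algebra_simps)
    then show "\<exists>y. DERIV h s :> y \<and> y \<le> 0"
      using h' by blast
  qed
  moreover have "h t0 = 0"
    by (simp add: h_def g_def z0)
  moreover have "h t \<ge> 0"
    by (simp add: h_def g_def)
  ultimately have "g t = 0"
    unfolding h_def by simp
  then show ?thesis
    by (simp add: g_def)
qed

lemma linear_ode_zero_unique:
  fixes z :: "real \<Rightarrow> real^'n" and B :: "real \<Rightarrow> real^'n^'n"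
  assumes z': "\<And>s. (z has_vector_derivative B s *v z s) (at s)"
    and B: "continuous_on UNIV B" and z0: "z t0 = 0"
  shows "z t = 0"
proof (cases "t0 \<le> t")
  case True
  then show ?thesis
    using linear_ode_zero_forward[OF z' B z0] by blast
next
  case False
  define y where "y = (\<lambda>s. z (- s))"
  have y': "(y has_vector_derivative - B (- s) *v y s) (at s)" for s
  proof -
    have "(uminus has_vector_derivative -1) (at s)"
      using has_vector_derivative_minus[OF has_vector_derivative_id] by simp
    from vector_diff_chain_at[OF this z'[of "- s"]] show ?thesis
      by (simp add: y_def o_def bounded_bilinear.minus_left[OF bounded_bilinear_matrix_vector_mult])
  qed
  have "continuous_on UNIV (\<lambda>s. - B (- s))"
    by (intro continuous_intros continuous_on_compose2[OF B]) auto
  moreover have "y (- t0) = 0"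
    by (simp add: y_def z0)
  ultimately have "y (- t) = 0"
    using linear_ode_zero_forward[OF y'] False by simp
  then show ?thesis
    by (simp add: y_def)
qed

lemma fundamental_matrix_mult_vec_has_vector_derivative:
  fixes A X :: "real \<Rightarrow> real^'n^'n"
  assumes "(X has_vector_derivative A t ** X t) (at t)"
  shows "((\<lambda>s. X s *v v) has_vector_derivative A t *v (X t *v v)) (at t)"
  using bounded_bilinear.has_vector_derivative[OF bounded_bilinear_matrix_vector_mult assms
      has_vector_derivative_const, of v]
  by (simp add: matrix_vector_mul_assoc)

lemma fundamental_matrix_solution:
  fixes A X :: "real \<Rightarrow> real^'n^'n"
  assumes A: "continuous_on UNIV A" and X': "\<And>t. (X has_vector_derivative A t ** X t) (at t)"
    and X0: "X 0 = mat 1" and z': "\<And>t. (z has_vector_derivative A t *v z t) (at t)"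
  shows "z t = X t *v z 0"
proof -
  define y where "y = (\<lambda>s. z s - X s *v z 0)"
  have "(y has_vector_derivative A s *v z s - A s *v (X s *v z 0)) (at s)" for s
    unfolding y_def
    by (rule has_vector_derivative_diff[OF z'
          fundamental_matrix_mult_vec_has_vector_derivative[OF X']])
  then have "(y has_vector_derivative A s *v y s) (at s)" for s
    by (simp add: y_def matrix_vector_mult_diff_distrib)
  moreover have "y 0 = 0"
    by (simp add: y_def X0)
  ultimately have "y t = 0"
    using linear_ode_zero_unique[OF _ A] by blast
  then show ?thesis
    by (simp add: y_def)
qed

lemma fundamental_matrix_invertible:
  fixes A X :: "real \<Rightarrow> real^'n^'n"
  assumes A: "continuous_on UNIV A" and X': "\<And>t. (X has_vector_derivative A t ** X t) (at t)"
    and X0: "X 0 = mat 1"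
  shows "invertible (X t)"
proof -
  have "v = 0" if "X t *v v = 0" for v
  proof -
    have "((\<lambda>s. X s *v v) has_vector_derivative A s *v (X s *v v)) (at s)" for s
      by (rule fundamental_matrix_mult_vec_has_vector_derivative[where A = A, OF X'])
    from linear_ode_zero_unique[OF this A, of t 0] that X0 show ?thesis
      by simp
  qed
  then show ?thesis
    using matrix_left_invertible_ker invertible_left_inverse by blast
qed

lemma Ck_linear_ode_solution:
  fixes A X :: "real \<Rightarrow> real^'n^'n"
  assumes X': "\<And>t. (X has_vector_derivative A t ** X t) (at t)"
  shows "Ck k A \<Longrightarrow> Ck k X"
proof (induction k)
  case (Suc k)
  have "Ck k (\<lambda>t. A t ** X t)"
    using Ck_bounded_bilinear[OF bounded_bilinear_matrix_matrix_mult Ck_SucD[OF Suc.prems]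
        Suc.IH[OF Ck_SucD[OF Suc.prems]]] by simp
  then show ?case
    by (rule Ck_SucI[OF X'])
qed simp

section \<open>Rank-one projections\<close>

lemma outer_mult_vec: "outer u w *v v = (w \<bullet> v) *\<^sub>R u"
  by (simp add: vec_eq_iff outer_def matrix_vector_mult_def inner_vec_def sum_distrib_left
      algebra_simps)

lemma rank_one_update_mult_vec: "(mat 1 - outer u w) *v v = v - (w \<bullet> v) *\<^sub>R u"
  by (simp add: matrix_vector_mult_diff_rdistrib outer_mult_vec)

lemma idempotent_rank_one_update:
  fixes u w :: "real^'n"
  assumes "u \<noteq> 0" and "(mat 1 - outer u w) ** (mat 1 - outer u w) = mat 1 - outer u w"
  shows "w = 0 \<or> w \<bullet> u = 1"
proof -
  let ?E = "mat 1 - outer u w"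
  have "?E *v (?E *v w) = ?E *v w"
    using assms(2) by (simp add: matrix_vector_mul_assoc)
  then have "(w \<bullet> w - (w \<bullet> w) * (w \<bullet> u)) *\<^sub>R u = 0"
    by (simp only: rank_one_update_mult_vec inner_diff_right inner_scaleR_right) simp
  then have "(w \<bullet> w) * (1 - w \<bullet> u) = 0"
    using assms(1) by (simp add: algebra_simps)
  then show ?thesis
    using assms(1) by auto
qed

lemma range_rank_one_update:
  fixes u w :: "real^'n"
  assumes "w \<bullet> u = 1"
  shows "range (\<lambda>v. (mat 1 - outer u w) *v v) = {v. w \<bullet> v = 0}"
proof (intro equalityI subsetI)
  fix v assume "v \<in> {v. w \<bullet> v = 0}"
  then have "(mat 1 - outer u w) *v v = v"
    by (simp add: rank_one_update_mult_vec)
  then show "v \<in> range (\<lambda>v. (mat 1 - outer u w) *v v)"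
    by (metis rangeI)
qed (use assms in \<open>auto simp: rank_one_update_mult_vec inner_diff_right\<close>)

lemma rank_rank_one_update:
  fixes u w :: "real^'n"
  assumes "w \<bullet> u = 1"
  shows "rank (mat 1 - outer u w) = CARD('n) - 1"
proof -
  have "w \<noteq> 0"
    using assms by auto
  then show ?thesis
    using range_rank_one_update[OF assms] dim_hyperplane[of w] by (simp add: rank_dim_range)
qed

lemma invariant_projection_eq_rank_one_update:
  fixes M P :: "real^'n^'n" and u w :: "real^'n"
  assumes wu: "w \<bullet> u = 1" and Mu: "M *v u = 0"
    and M_bij_E: "bij_betw (\<lambda>v. M *v v) (range (\<lambda>v. (mat 1 - outer u w) *v v))
        (range (\<lambda>v. (mat 1 - outer u w) *v v))"
    and P_idem: "P ** P = P" and P_rank: "rank P = CARD('n) - 1" and MP: "M ** P = P ** M"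
    and M_bij_P: "bij_betw (\<lambda>v. M *v v) (range (\<lambda>v. P *v v)) (range (\<lambda>v. P *v v))"
  shows "P = mat 1 - outer u w"
proof -
  let ?E = "mat 1 - outer u w"
  have decomp: "v = ?E *v v + (w \<bullet> v) *\<^sub>R u" for v
    by (simp add: rank_one_update_mult_vec)
  have Pu: "P *v u = 0"
  proof -
    have "M *v (P *v u) = P *v (M *v u)"
      by (simp add: matrix_vector_mul_assoc MP)
    then have "M *v (P *v u) = M *v (P *v 0)"
      by (simp add: Mu)
    moreover have "inj_on (\<lambda>v. M *v v) (range (\<lambda>v. P *v v))"
      using M_bij_P by (simp add: bij_betw_def)
    ultimately have "P *v u = P *v 0"
      by (metis inj_onD rangeI)
    then show ?thesis
      by simp
  qed
  have "range (\<lambda>v. P *v v) \<subseteq> range (\<lambda>v. ?E *v v)"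
  proof -
    have "M *v v = M *v (?E *v v)" for v
      using arg_cong[OF decomp[of v], of "\<lambda>x. M *v x"] Mu
      by (simp add: matrix_vector_right_distrib matrix_vector_mult_scaleR)
    then have "range (\<lambda>v. M *v v) \<subseteq> (\<lambda>v. M *v v) ` range (\<lambda>v. ?E *v v)"
      by auto
    also have "\<dots> = range (\<lambda>v. ?E *v v)"
      using M_bij_E by (simp add: bij_betw_def)
    finally have "range (\<lambda>v. M *v v) \<subseteq> range (\<lambda>v. ?E *v v)" .
    moreover have "range (\<lambda>v. P *v v) \<subseteq> range (\<lambda>v. M *v v)"
      using M_bij_P by (auto simp: bij_betw_def)
    ultimately show ?thesis
      by blast
  qed
  moreover have "subspace (range (\<lambda>v. A *v v))" for A :: "real^'n^'n"
    by (rule linear_subspace_image[OF matrix_vector_mul_linear subspace_UNIV])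
  moreover have "dim (range (\<lambda>v. ?E *v v)) \<le> dim (range (\<lambda>v. P *v v))"
    using P_rank rank_rank_one_update[OF wu] by (simp add: rank_dim_range)
  ultimately have ranges: "range (\<lambda>v. P *v v) = range (\<lambda>v. ?E *v v)"
    by (intro subspace_dim_equal)
  have "P *v v = ?E *v v" for v
  proof -
    obtain y where "?E *v v = P *v y"
      using ranges by blast
    then have "P *v (?E *v v) = ?E *v v"
      using P_idem by (simp add: matrix_vector_mul_assoc)
    then show ?thesis
      using arg_cong[OF decomp[of v], of "\<lambda>x. P *v x"] Pu
      by (simp add: matrix_vector_right_distrib matrix_vector_mult_scaleR)
  qed
  then show ?thesis
    by (simp add: matrix_eq)
qed

section \<open>The variational equation along a periodic orbit\<close>

locale hyperbolic_periodic_orbit =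
  fixes f :: "real^'n \<Rightarrow> real^'n" and Df :: "real^'n \<Rightarrow> real^'n^'n" and T :: real
    and \<gamma> :: "real \<Rightarrow> real^'n" and X :: "real \<Rightarrow> real^'n^'n" and w :: "real^'n"
  assumes f_smooth: "smooth_map f"
    and Df: "\<And>x. (f has_derivative (\<lambda>h. Df x *v h)) (at x)"
    and \<gamma>_periodic: "\<And>t. \<gamma> (t + 1) = \<gamma> t"
    and \<gamma>_sol: "\<And>t. (\<gamma> has_vector_derivative (T *\<^sub>R f (\<gamma> t))) (at t)"
    and nonstat: "f (\<gamma> 0) \<noteq> 0"
    and X_sol: "\<And>t. (X has_vector_derivative (T *\<^sub>R (Df (\<gamma> t) ** X t))) (at t)"
    and X0: "X 0 = mat 1"
    and Q_proj: "\<And>t. Q_mat X (f (\<gamma> 0)) w t ** Q_mat X (f (\<gamma> 0)) w t = Q_mat X (f (\<gamma> 0)) w t"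
    and Q_bij: "\<And>t. bij_betw (\<lambda>v. Gamma_mat X t *v v)
                  (mat_image (Q_mat X (f (\<gamma> 0)) w t)) (mat_image (Q_mat X (f (\<gamma> 0)) w t))"
begin

abbreviation "Q \<equiv> Q_mat X (f (\<gamma> 0)) w"
abbreviation "E \<equiv> mat 1 - outer (f (\<gamma> 0)) w"
abbreviation "A t \<equiv> T *\<^sub>R Df (\<gamma> t)"

lemma X_ode: "(X has_vector_derivative A t ** X t) (at t)"
  using X_sol by (simp add: bounded_bilinear.scaleR_left[OF bounded_bilinear_matrix_matrix_mult])

lemma A_Ck: "Ck k A"
  using Ck_autonomous_ode_solution[OF smooth_map_scaleR[OF f_smooth] \<gamma>_sol]
  by (intro Ck_bounded_linear[OF bounded_linear_scaleR_right]
      Ck_compose_derivative_matrix[OF f_smooth Df])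

lemma X_invertible: "invertible (X t)"
  using fundamental_matrix_invertible[OF Ck_Suc_continuous[OF A_Ck] X_ode X0] .

lemma Q_conj: "Q t = X t ** E ** matrix_inv (X t)"
  by (simp add: Q_mat_def)

lemma Q_0: "Q 0 = E"
  by (simp add: Q_conj X0 matrix_inv_mat_1)

lemma Gamma_0: "Gamma_mat X 0 = X 1 - mat 1"
  by (simp add: Gamma_mat_def X0 matrix_inv_mat_1)

lemma monodromy_fixes_f: "(X 1 - mat 1) *v f (\<gamma> 0) = 0"
proof -
  have "((\<lambda>t. f (\<gamma> t)) has_vector_derivative A t *v f (\<gamma> t)) (at t)" for t
    using diff_chain_at[OF \<gamma>_sol[unfolded has_vector_derivative_def] Df]
    by (simp add: has_vector_derivative_def o_def matrix_vector_mult_scaleR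
        bounded_bilinear.scaleR_left[OF bounded_bilinear_matrix_vector_mult])
  then have "X 1 *v f (\<gamma> 0) = f (\<gamma> 1)"
    using fundamental_matrix_solution[OF Ck_Suc_continuous[OF A_Ck] X_ode X0] by metis
  also have "\<dots> = f (\<gamma> 0)"
    using \<gamma>_periodic[of 0] by simp
  finally show ?thesis
    by (simp add: matrix_vector_mult_diff_rdistrib)
qed

lemma E_bij: "bij_betw (\<lambda>v. (X 1 - mat 1) *v v) (range (\<lambda>v. E *v v)) (range (\<lambda>v. E *v v))"
  using Q_bij[of 0] by (simp add: Q_0 Gamma_0 mat_image_def)

lemma w_inner_f: "w \<bullet> f (\<gamma> 0) = 1"
proof -
  have "w \<noteq> 0"
  proof
    assume "w = 0"
    then have "E = mat 1"
      by (simp add: outer_def vec_eq_iff)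
    then have "inj (\<lambda>v. (X 1 - mat 1) *v v)"
      using E_bij by (simp add: bij_betw_def)
    then show False
      using monodromy_fixes_f nonstat by (metis injD matrix_vector_mult_0_right)
  qed
  moreover have "E ** E = E"
    using Q_proj[of 0] by (simp add: Q_0)
  ultimately show ?thesis
    using idempotent_rank_one_update nonstat by blast
qed

lemma Q_smooth: "smooth_map Q"
proof (rule smooth_map_if_Ck)
  fix k
  have "Ck k X" and "Ck k (\<lambda>t. matrix_inv (X t))"
    using Ck_linear_ode_solution[OF X_ode A_Ck] by (auto intro: Ck_matrix_inv X_invertible)
  then show "Ck k Q"
    unfolding Q_conj[abs_def]
    by (intro Ck_bounded_bilinear[OF bounded_bilinear_matrix_matrix_mult, of k "\<lambda>t. X t ** E"]
        Ck_bounded_bilinear[OF bounded_bilinear_matrix_matrix_mult] Ck_const)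
qed

lemma Q_rank: "rank (Q t) = CARD('n) - 1"
  by (simp add: Q_conj rank_similar X_invertible rank_rank_one_update w_inner_f)

lemma X_intertwines_Q: "X t ** Q 0 = Q t ** X t"
  unfolding Q_0 Q_conj[of t]
  by (simp add: matrix_mul_assoc[symmetric] matrix_inv_left X_invertible)

lemma Q_unique:
  assumes P_idem: "\<And>t. P t ** P t = P t" and P_rank: "\<And>t. rank (P t) = CARD('n) - 1"
    and P_periodic: "\<And>t. P (t + 1) = P t" and XP: "\<And>t. X t ** P 0 = P t ** X t"
    and P_bij: "\<And>t. bij_betw (\<lambda>v. Gamma_mat X t *v v) (mat_image (P t)) (mat_image (P t))"
  shows "P = Q"
proof -
  have P0: "P 0 = E"
  proof (rule invariant_projection_eq_rank_one_update[OF w_inner_f _ E_bij P_idem P_rank])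
    show "(X 1 - mat 1) *v f (\<gamma> 0) = 0"
      by (rule monodromy_fixes_f)
    show "(X 1 - mat 1) ** P 0 = P 0 ** (X 1 - mat 1)"
      using XP[of 1] P_periodic[of 0]
      by (simp add: bounded_bilinear.diff_left[OF bounded_bilinear_matrix_matrix_mult]
          bounded_bilinear.diff_right[OF bounded_bilinear_matrix_matrix_mult])
    show "bij_betw (\<lambda>v. (X 1 - mat 1) *v v) (range (\<lambda>v. P 0 *v v)) (range (\<lambda>v. P 0 *v v))"
      using P_bij[of 0] by (simp add: Gamma_0 mat_image_def)
  qed
  have "P t = Q t" for t
  proof -
    have "X t ** P 0 ** matrix_inv (X t) = P t ** (X t ** matrix_inv (X t))"
      using XP[of t] by (simp add: matrix_mul_assoc)
    then show ?thesis
      by (simp add: matrix_inv_right X_invertible Q_conj P0)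
  qed
  then show ?thesis
    by blast
qed

end

theorem mainTheorem7:
  fixes f :: "real^'n \<Rightarrow> real^'n"
    and Df :: "real^'n \<Rightarrow> real^'n^'n"
    and T :: real
    and \<gamma> :: "real \<Rightarrow> real^'n"
    and X :: "real \<Rightarrow> real^'n^'n"
    and w :: "real^'n"
  assumes f_smooth: "smooth_map f"
    and Df: "\<And>x. (f has_derivative (\<lambda>h. Df x *v h)) (at x)"
    and T_pos: "T > 0"
    and \<gamma>_periodic: "\<And>t. \<gamma> (t + 1) = \<gamma> t"
    and \<gamma>_sol: "\<And>t. (\<gamma> has_vector_derivative (T *\<^sub>R f (\<gamma> t))) (at t)"
    and nonstat: "f (\<gamma> 0) \<noteq> 0"
    and X_sol: "\<And>t. (X has_vector_derivative (T *\<^sub>R (Df (\<gamma> t) ** X t))) (at t)"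
    and X0: "X 0 = mat 1"
    and Q_proj: "\<And>t. Q_mat X (f (\<gamma> 0)) w t ** Q_mat X (f (\<gamma> 0)) w t = Q_mat X (f (\<gamma> 0)) w t"
    and Q_periodic: "\<And>t. Q_mat X (f (\<gamma> 0)) w (t + 1) = Q_mat X (f (\<gamma> 0)) w t"
    and Q_bij: "\<And>t. bij_betw (\<lambda>v. Gamma_mat X t *v v)
                  (mat_image (Q_mat X (f (\<gamma> 0)) w t)) (mat_image (Q_mat X (f (\<gamma> 0)) w t))"
  shows "(let P = Q_mat X (f (\<gamma> 0)) w in
            smooth_map P \<and>
            (\<forall>t. P t ** P t = P t) \<and>
            (\<forall>t. rank (P t) = CARD('n) - 1) \<and>
            (\<forall>t. P (t + 1) = P t) \<and>
            (\<forall>t. X t ** P 0 = P t ** X t) \<and>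
            (\<forall>t. bij_betw (\<lambda>v. Gamma_mat X t *v v) (mat_image (P t)) (mat_image (P t))))
       \<and> (\<forall>P :: real \<Rightarrow> real^'n^'n.
            smooth_map P \<and>
            (\<forall>t. P t ** P t = P t) \<and>
            (\<forall>t. rank (P t) = CARD('n) - 1) \<and>
            (\<forall>t. P (t + 1) = P t) \<and>
            (\<forall>t. X t ** P 0 = P t ** X t) \<and>
            (\<forall>t. bij_betw (\<lambda>v. Gamma_mat X t *v v) (mat_image (P t)) (mat_image (P t)))
            \<longrightarrow> P = Q_mat X (f (\<gamma> 0)) w)"
proof -
  interpret hyperbolic_periodic_orbit f Df T \<gamma> X w
    by unfold_locales (fact assms)+
  show ?thesis
    unfolding Let_def using Q_smooth Q_proj Q_rank Q_periodic X_intertwines_Q Q_bij Q_unique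
    by auto
qed

end
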